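(* For $F\in(0,1]$, $k\in(0,1)$, real $d\ge 2$ and integer $n\ge 1$, let $G=k^{n-1}F$ and $$C_{\mathrm{dp}}(F,d,n,k)=\frac{(1-G)\,(4^{nd}G+2^{nd}-2)}{\big[(2^{nd}-2)G+1\big](2^{nd}-1)}.$$ If $F>2^{-d}$ and $k>2^{-d}$, then, for every $n\ge1$, $C_{\mathrm{dp}}$ is monotonically non-increasing as each of $F$, $d$ and $k$ increases (the other variables held fixed), i.e. $\partial_F C_{\mathrm{dp}}\le 0$, $\partial_d C_{\mathrm{dp}}\le 0$ and $\partial_k C_{\mathrm{dp}}\le 0$ at every such point.
   Context: Interpretation: for integers $d,n$, $C_{\mathrm{dp}}(F,d,n,k)$ equals $\sum_s\frac{4\lambda^+_s\lambda^-_s}{\lambda^+_s+\lambda^-_s}$ computed from the eigenvalues of the $nd$-qubit depolarized GHZ state $G|\mathrm{GHZ}_{nd}\rangle\langle\mathrm{GHZ}_{nd}|+\frac{1-G}{2^{nd}-1}(I-|\mathrm{GHZ}_{nd}\rangle\langle\mathrm{GHZ}_{nd}|)$ in the GHZ basis $|G^\pm_s\rangle=(|s\rangle\pm|\bar s\rangle)/\sqrt2$ (sum over one representative $s$ of each complementary pair of bit strings), i.e. a state whose fidelity $k^{n-1}F$ models imperfect local extension of a $d$-qubit GHZ state of fidelity $F$ to $n$ qubits per node with per-step quality $k$. *)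

theory Defs
  imports "HOL-Analysis.Analysis"
begin

definition Cdp :: "real \<Rightarrow> real \<Rightarrow> nat \<Rightarrow> real \<Rightarrow> real" where
  "Cdp F d n k =
     (let G = k ^ (n - 1) * F; N = 2 powr (real n * d) in
       (1 - G) * (4 powr (real n * d) * G + N - 2) / (((N - 2) * G + 1) * (N - 1)))"

end

theory Submission
  imports Defs
begin

text \<open>\<open>Cdp F d n k\<close> depends on \<open>F\<close>, \<open>d\<close>, \<open>k\<close> only through \<open>N = 2^(nd)\<close> and \<open>G = k^(n-1) F\<close>,
  each non-decreasing in its variable. Both partial derivatives of the resulting rational
  function of \<open>N\<close> and \<open>G\<close> carry the factor \<open>1 - N G\<close>, with the remaining factors nonnegative
  for \<open>N > 2\<close> and \<open>0 \<le> G \<le> 1\<close>; and \<open>F, k > 2^(-d)\<close> force \<open>N G > 2^(nd) 2^(-nd) = 1\<close>.\<close>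

definition Cdp_NG :: "real \<Rightarrow> real \<Rightarrow> real" where
  "Cdp_NG N G = (1 - G) * (N\<^sup>2 * G + N - 2) / (((N - 2) * G + 1) * (N - 1))"

lemma Cdp_eq_Cdp_NG: "Cdp F d n k = Cdp_NG (2 powr (real n * d)) (k ^ (n - 1) * F)"
proof -
  have "(4::real) powr (real n * d) = (2 powr (real n * d))\<^sup>2"
    using powr_mult[of 2 2 "real n * d"] by (simp add: power2_eq_square)
  then show ?thesis by (simp add: Cdp_def Cdp_NG_def Let_def)
qed

lemma DERIV_Cdp_NG_G:
  assumes "(N - 2) * G + 1 \<noteq> 0" "N \<noteq> 1"
  shows "(Cdp_NG N has_real_derivative
     (1 - N * G) * (3 * N - 2 + N * (N - 2) * G) / (((N - 2) * G + 1)\<^sup>2 * (N - 1))) (at G)"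
proof -
  have num: "((1 - G) * N\<^sup>2 - (N\<^sup>2 * G + N - 2)) * (((N - 2) * G + 1) * (N - 1))
        - (1 - G) * (N\<^sup>2 * G + N - 2) * ((N - 2) * (N - 1))
      = (N - 1) * ((1 - N * G) * (3 * N - 2 + N * (N - 2) * G))"
    by (simp add: algebra_simps power2_eq_square)
  have den: "(((N - 2) * G + 1) * (N - 1)) * (((N - 2) * G + 1) * (N - 1))
      = (N - 1) * (((N - 2) * G + 1)\<^sup>2 * (N - 1))"
    by (simp add: power2_eq_square)
  have "((\<lambda>G. (1 - G) * (N\<^sup>2 * G + N - 2)) has_real_derivative
      (1 - G) * N\<^sup>2 - (N\<^sup>2 * G + N - 2)) (at G)"
       "((\<lambda>G. ((N - 2) * G + 1) * (N - 1)) has_real_derivative (N - 2) * (N - 1)) (at G)"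
    by (auto intro!: derivative_eq_intros)
  from DERIV_divide[OF this] show ?thesis
    unfolding Cdp_NG_def[abs_def] num den using assms by simp
qed

lemma DERIV_Cdp_NG_N:
  assumes "(N - 2) * G + 1 \<noteq> 0" "N \<noteq> 1"
  shows "((\<lambda>N. Cdp_NG N G) has_real_derivative
     (1 - G) * (1 - N * G) * (1 + (3 * N - 4) * G) / (((N - 2) * G + 1) * (N - 1))\<^sup>2) (at N)"
proof -
  have num: "(1 - G) * (2 * N * G + 1) * (((N - 2) * G + 1) * (N - 1))
        - (1 - G) * (N\<^sup>2 * G + N - 2) * (G * (N - 1) + ((N - 2) * G + 1))
      = (1 - G) * (1 - N * G) * (1 + (3 * N - 4) * G)"
    by (simp add: algebra_simps power2_eq_square)
  have "((\<lambda>N. (1 - G) * (N\<^sup>2 * G + N - 2)) has_real_derivative (1 - G) * (2 * N * G + 1)) (at N)"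
       "((\<lambda>N. ((N - 2) * G + 1) * (N - 1)) has_real_derivative G * (N - 1) + ((N - 2) * G + 1))
         (at N)"
    by (auto intro!: derivative_eq_intros)
  from DERIV_divide[OF this] show ?thesis
    unfolding Cdp_NG_def num power2_eq_square[of "((N - 2) * G + 1) * (N - 1)"] using assms
    by simp
qed

lemma Cdp_NG_nonincreasing_G:
  assumes "N > 2" "G \<ge> 0" "N * G \<ge> 1"
  shows "\<exists>D. (Cdp_NG N has_real_derivative D) (at G) \<and> D \<le> 0"
proof (intro exI conjI)
  have pos: "(N - 2) * G + 1 > 0" using assms by (intro add_nonneg_pos mult_nonneg_nonneg) auto
  then show "(Cdp_NG N has_real_derivative
     (1 - N * G) * (3 * N - 2 + N * (N - 2) * G) / (((N - 2) * G + 1)\<^sup>2 * (N - 1))) (at G)"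
    using assms by (intro DERIV_Cdp_NG_G) auto
  show "(1 - N * G) * (3 * N - 2 + N * (N - 2) * G) / (((N - 2) * G + 1)\<^sup>2 * (N - 1)) \<le> 0"
    using assms pos
    by (intro divide_nonpos_nonneg mult_nonpos_nonneg) (auto intro!: add_nonneg_nonneg)
qed

lemma Cdp_NG_nonincreasing_N:
  assumes "N > 2" "0 \<le> G" "G \<le> 1" "N * G \<ge> 1"
  shows "\<exists>D. ((\<lambda>N. Cdp_NG N G) has_real_derivative D) (at N) \<and> D \<le> 0"
proof (intro exI conjI)
  have "(N - 2) * G + 1 > 0" using assms by (intro add_nonneg_pos mult_nonneg_nonneg) auto
  then show "((\<lambda>N. Cdp_NG N G) has_real_derivative
     (1 - G) * (1 - N * G) * (1 + (3 * N - 4) * G) / (((N - 2) * G + 1) * (N - 1))\<^sup>2) (at N)"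
    using assms by (intro DERIV_Cdp_NG_N) auto
  show "(1 - G) * (1 - N * G) * (1 + (3 * N - 4) * G) / (((N - 2) * G + 1) * (N - 1))\<^sup>2 \<le> 0"
    using assms
    by (intro divide_nonpos_nonneg mult_nonneg_nonpos2 mult_nonneg_nonpos) auto
qed

lemma DERIV_nonpos_chain:
  assumes "(f has_real_derivative D) (at (g x))" "D \<le> 0"
    and "(g has_real_derivative E) (at x)" "0 \<le> E"
  shows "\<exists>D'. ((\<lambda>y. f (g y)) has_real_derivative D') (at x) \<and> D' \<le> 0"
  using DERIV_chain2[OF assms(1,3)] assms(2,4) mult_nonpos_nonneg by blast

lemma powr_mult_pow_gt_one:
  fixes F d k :: real and n :: nat
  assumes "n \<ge> 1" "F > 2 powr (- d)" "k > 2 powr (- d)"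
  shows "2 powr (real n * d) * (k ^ (n - 1) * F) > 1"
proof -
  have "(2 powr (- d)) ^ (n - 1) * 2 powr (- d) < k ^ (n - 1) * F"
    using assms by (intro mult_le_less_imp_less power_mono) auto
  moreover have "(2 powr (- d)) ^ (n - 1) * 2 powr (- d) = 2 powr (- (real n * d))"
    using assms(1)
    by (simp add: powr_realpow[symmetric] powr_powr powr_add[symmetric] algebra_simps)
  ultimately have
    "2 powr (real n * d) * 2 powr (- (real n * d)) < 2 powr (real n * d) * (k ^ (n - 1) * F)"
    by simp
  then show ?thesis by (simp add: powr_add[symmetric])
qed

theorem proposition3:
  fixes F d k :: real and n :: nat
  assumes "0 < F" "F \<le> 1" "0 < k" "k < 1" "2 \<le> d" "1 \<le> n"
    and "F > 2 powr (- d)" "k > 2 powr (- d)"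
  shows "(\<exists>D. ((\<lambda>x. Cdp x d n k) has_real_derivative D) (at F) \<and> D \<le> 0)
       \<and> (\<exists>D. ((\<lambda>x. Cdp F x n k) has_real_derivative D) (at d) \<and> D \<le> 0)
       \<and> (\<exists>D. ((\<lambda>x. Cdp F d n x) has_real_derivative D) (at k) \<and> D \<le> 0)"
proof -
  define N where "N = 2 powr (real n * d)"
  define G where "G = k ^ (n - 1) * F"
  have "2 \<le> real n * d" using assms(5,6) mult_mono[of 1 "real n" 2 d] by simp
  then have "N > 2" unfolding N_def using powr_mono[of 2 "real n * d" 2] by simp
  moreover have "0 \<le> G" "G \<le> 1"
    unfolding G_def using assms(1-4) by (simp_all add: mult_le_one power_le_one)
  moreover have "N * G \<ge> 1"
    unfolding N_def G_def using powr_mult_pow_gt_one[OF assms(6-8)] by simp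
  ultimately obtain DG DN where
    DG: "(Cdp_NG N has_real_derivative DG) (at G)" "DG \<le> 0" and
    DN: "((\<lambda>N. Cdp_NG N G) has_real_derivative DN) (at N)" "DN \<le> 0"
    using Cdp_NG_nonincreasing_G Cdp_NG_nonincreasing_N by meson
  have dF: "((\<lambda>x. k ^ (n - 1) * x) has_real_derivative k ^ (n - 1)) (at F)"
    and dd: "((\<lambda>x. 2 powr (real n * x)) has_real_derivative N * (ln 2 * real n)) (at d)"
    and dk: "((\<lambda>x. x ^ (n - 1) * F) has_real_derivative real (n - 1) * k ^ (n - 2) * F) (at k)"
    unfolding N_def by (auto intro!: derivative_eq_intros simp: numeral_2_eq_2)
  have F_case:
    "\<exists>D. ((\<lambda>x. Cdp_NG N (k ^ (n - 1) * x)) has_real_derivative D) (at F) \<and> D \<le> 0"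
    using DG assms(3) by (intro DERIV_nonpos_chain[OF _ _ dF]) (auto simp: G_def)
  have d_case:
    "\<exists>D. ((\<lambda>x. Cdp_NG (2 powr (real n * x)) G) has_real_derivative D) (at d) \<and> D \<le> 0"
    using DN \<open>N > 2\<close> by (intro DERIV_nonpos_chain[OF _ _ dd]) (auto simp: N_def)
  have k_case:
    "\<exists>D. ((\<lambda>x. Cdp_NG N (x ^ (n - 1) * F)) has_real_derivative D) (at k) \<and> D \<le> 0"
    using DG assms(1,3) by (intro DERIV_nonpos_chain[OF _ _ dk]) (auto simp: G_def)
  show ?thesis
    using F_case d_case k_case unfolding Cdp_eq_Cdp_NG N_def G_def by (intro conjI)
qed

end
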